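(* In multihop Peg Duotaire, for every integer $n\ge 0$, the position $11(01)^n$ has nim-value $n+1$.
   Context: Peg Duotaire is an impartial two-player game played on the infinite line of sites indexed by $\mathbb{Z}$, each site holding a peg or being a hole, with finitely many pegs. A word $w\in\{0,1\}^*$ denotes the position in which $w$ is written on consecutive sites ($1$ = peg, $0$ = hole) and all other sites are holes. A hop: for a peg at site $i$, a peg at site $i+d$ and a hole at site $i+2d$ ($d=\pm1$), move the peg from $i$ to $i+2d$ and remove the peg at $i+d$. In the multihop version, a move is a sequence of one or more hops all performed by the same peg. Players alternate moves; a player unable to move loses. The nim-value of a position is the least nonnegative integer not among the nim-values of positions reachable in one move. *)

theory Defs
  imports Main
begin

text \<open>A position is the (finite) set of sites of \<int> holding a peg.\<close>

definition hop :: "int set \<Rightarrow> int \<Rightarrow> int \<Rightarrow> int set \<Rightarrow> bool" where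
  "hop p i d q \<longleftrightarrow> (d = 1 \<or> d = -1) \<and> i \<in> p \<and> i + d \<in> p \<and> i + 2*d \<notin> p
     \<and> q = (p - {i, i + d}) \<union> {i + 2*d}"

inductive hops :: "int set \<Rightarrow> int \<Rightarrow> int set \<Rightarrow> int \<Rightarrow> bool" where
  first: "hop p i d q \<Longrightarrow> hops p i q (i + 2*d)"
| more: "hops p i q j \<Longrightarrow> hop q j d r \<Longrightarrow> hops p i r (j + 2*d)"

definition move :: "int set \<Rightarrow> int set \<Rightarrow> bool" where
  "move p q \<longleftrightarrow> (\<exists>i j. hops p i q j)"

definition mex :: "nat set \<Rightarrow> nat" where
  "mex S = (LEAST n. n \<notin> S)"

definition move_rel :: "(int set \<times> int set) set" where
  "move_rel = {(q, p). finite p \<and> move p q}"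

text \<open>Nim-value, by well-founded recursion along moves (each hop removes a peg).\<close>
definition nimval :: "int set \<Rightarrow> nat" where
  "nimval = wfrec move_rel (\<lambda>f p. mex (f ` {q. move p q}))"

text \<open>The position denoted by a word (True = peg), written on sites 0,1,...\<close>
definition word_pos :: "bool list \<Rightarrow> int set" where
  "word_pos w = {int k | k. k < length w \<and> w ! k}"

end

theory Submission
  imports Defs
begin

(* Write the ladder 11(01)^(k-1) with its last peg on a fixed site e.  A single hop from it is
   either the leftmost peg hopping right, giving the ladder one step shorter with the same last
   site, or the second peg hopping left, giving 1000(10)^(k-2), from which no hop is possible.
   Hence the moves from the ladder of length k lead exactly to the ladders of every length
   k' < k (the leftmost peg hopping k - k' times) and to dead positions of value 0, so by
   induction its nim-value is mex {0, ..., k - 1} = k. *)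

lemma hop_finite_card_less:
  assumes "hop p i d q" and "finite p"
  shows "finite q \<and> card q < card p"
proof -
  from assms(1) have d: "d = 1 \<or> d = -1" and pegs: "i \<in> p" "i + d \<in> p" "i + 2*d \<notin> p"
    and q: "q = (p - {i, i + d}) \<union> {i + 2*d}" by (auto simp: hop_def)
  have hopped: "{i, i + d} \<subseteq> p" "card {i, i + d} = 2" using d pegs by auto
  then have "card (p - {i, i + d}) = card p - 2" and "2 \<le> card p"
    using assms(2) card_mono[OF assms(2) hopped(1)] by (simp_all add: card_Diff_subset)
  then show ?thesis using q pegs assms(2) by simp
qed

lemma hops_finite_card_less: "hops p i q j \<Longrightarrow> finite p \<Longrightarrow> finite q \<and> card q < card p"
  by (induction rule: hops.induct) (auto dest: hop_finite_card_less)

lemma wf_move_rel: "wf move_rel"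
proof (rule wf_subset[OF wf_measure[of card]])
  show "move_rel \<subseteq> measure card"
    by (auto simp: move_rel_def move_def dest: hops_finite_card_less)
qed

lemma nimval_eq_mex: "finite p \<Longrightarrow> nimval p = mex (nimval ` {q. move p q})"
proof -
  assume "finite p"
  have "nimval p = mex (cut nimval move_rel p ` {q. move p q})"
    unfolding nimval_def by (subst wfrec[OF wf_move_rel]) simp
  also have "cut nimval move_rel p ` {q. move p q} = nimval ` {q. move p q}"
    using \<open>finite p\<close> by (auto simp: cut_def move_rel_def image_def)
  finally show ?thesis .
qed

lemma mex_lessThan: "mex {..<k} = k"
  unfolding mex_def by (rule Least_equality) auto

lemma hops_imp_hop: "hops p i q j \<Longrightarrow> \<exists>d q'. hop p i d q'"
  by (induction rule: hops.induct) auto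

lemma nimval_eq_0_if_no_hop:
  assumes "finite p" and "\<And>i d q. \<not> hop p i d q"
  shows "nimval p = 0"
proof -
  have "{q. move p q} = {}"
    using assms(2) by (auto simp: move_def dest: hops_imp_hop)
  then show ?thesis using nimval_eq_mex[OF assms(1)] mex_lessThan[of 0] by simp
qed

text \<open>ladder_pos e k is the word 11(01)^(k-1) written with its last peg on site e;
  ladder_pos e 0 is the single peg e + 1.\<close>
definition ladder_pos :: "int \<Rightarrow> nat \<Rightarrow> int set" where
  "ladder_pos e k = insert (e - 2 * int k + 1) {x. e - 2 * int k + 2 \<le> x \<and> x \<le> e \<and> even (e - x)}"

text \<open>What is left after the second peg of ladder_pos e k hops to the left: 1000(10)^(k-2).\<close>
definition blocked_pos :: "int \<Rightarrow> nat \<Rightarrow> int set" where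
  "blocked_pos e k = insert (e - 2 * int k) {x. e - 2 * int k + 4 \<le> x \<and> x \<le> e \<and> even (e - x)}"

lemma finite_ladder_pos: "finite (ladder_pos e k)"
proof -
  have "ladder_pos e k \<subseteq> {e - 2 * int k + 1 .. e + 1}" unfolding ladder_pos_def by auto
  then show ?thesis by (rule finite_subset) simp
qed

lemma finite_blocked_pos: "finite (blocked_pos e k)"
proof -
  have "blocked_pos e k \<subseteq> {e - 2 * int k .. e}" unfolding blocked_pos_def by auto
  then show ?thesis by (rule finite_subset) simp
qed

lemma no_hop_blocked_pos: "\<not> hop (blocked_pos e k) i d q"
  unfolding hop_def blocked_pos_def by (auto; presburger)

lemma nimval_blocked_pos: "nimval (blocked_pos e k) = 0"
  by (rule nimval_eq_0_if_no_hop[OF finite_blocked_pos no_hop_blocked_pos])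

lemma hop_ladder_pos_right: "hop (ladder_pos e (Suc k)) (e - 2 * int (Suc k) + 1) 1 (ladder_pos e k)"
  unfolding hop_def ladder_pos_def by (auto; presburger)

lemma hop_ladder_pos:
  assumes "hop (ladder_pos e k) i d q"
  shows "0 < k \<and> (q = ladder_pos e (k - 1) \<or> q = blocked_pos e k)"
proof -
  from assms have d: "d = 1 \<or> d = -1" and pegs: "i \<in> ladder_pos e k" "i + d \<in> ladder_pos e k"
    and q: "q = (ladder_pos e k - {i, i + d}) \<union> {i + 2*d}" by (auto simp: hop_def)
  have "0 < k" using d pegs by (auto simp: ladder_pos_def; presburger)
  then obtain k' where k: "k = Suc k'" using gr0_conv_Suc by blast
  consider "i = e - 2 * int k + 1" "d = 1" | "i = e - 2 * int k + 2" "d = -1"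
    using d pegs by (auto simp: ladder_pos_def; presburger)
  then show ?thesis
  proof cases
    case 1
    have "q = ladder_pos e k'"
      unfolding q 1 k ladder_pos_def by (rule set_eqI) (simp; presburger)
    then show ?thesis using k by simp
  next
    case 2
    have "q = blocked_pos e k"
      unfolding q 2 blocked_pos_def ladder_pos_def by (rule set_eqI) (simp; presburger)
    then show ?thesis using k by simp
  qed
qed

lemma hops_from_ladder_pos:
  assumes "hops p i q j" and "p = ladder_pos e k"
  shows "(\<exists>k' < k. q = ladder_pos e k') \<or> (0 < k \<and> (\<exists>k'. q = blocked_pos e k'))"
  using assms
proof (induction rule: hops.induct)
  case (first p i d q)
  then have "0 < k \<and> (q = ladder_pos e (k - 1) \<or> q = blocked_pos e k)"
    using hop_ladder_pos by blast
  then show ?case by (metis diff_less zero_less_one)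
next
  case (more p i q j d r)
  then obtain k' where "k' < k" "q = ladder_pos e k'"
    using no_hop_blocked_pos by blast
  with more.hyps(2) have "0 < k' \<and> (r = ladder_pos e (k' - 1) \<or> r = blocked_pos e k')"
    using hop_ladder_pos by blast
  then show ?case using \<open>k' < k\<close> by (auto intro: less_imp_diff_less)
qed

lemma hops_ladder_pos_descend:
  assumes "k' < k"
  shows "hops (ladder_pos e k) (e - 2 * int k + 1) (ladder_pos e k') (e - 2 * int k' + 1)"
proof -
  obtain k0 where k: "k = Suc k0" using assms gr0_conv_Suc by blast
  have "k' \<le> k0" using assms k by simp
  then show ?thesis
  proof (induction k' rule: inc_induct)
    case base
    show ?case using hops.first[OF hop_ladder_pos_right[of e k0]] k by (simp add: algebra_simps)
  next
    case (step k')
    from hops.more[OF step.IH hop_ladder_pos_right[of e k']] show ?case by (simp add: algebra_simps)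
  qed
qed

lemma nimval_ladder_pos: "nimval (ladder_pos e k) = k"
proof (induction k rule: less_induct)
  case (less k)
  have "nimval ` {q. move (ladder_pos e k) q} = {..<k}"
  proof (intro equalityI subsetI)
    fix v assume "v \<in> nimval ` {q. move (ladder_pos e k) q}"
    then obtain q i j where v: "v = nimval q" and "hops (ladder_pos e k) i q j"
      by (auto simp: move_def)
    then consider k' where "k' < k" "q = ladder_pos e k'" | k' where "0 < k" "q = blocked_pos e k'"
      using hops_from_ladder_pos by blast
    then show "v \<in> {..<k}"
      by cases (use v less.IH nimval_blocked_pos in auto)
  next
    fix k' assume "k' \<in> {..<k}"
    then have "move (ladder_pos e k) (ladder_pos e k')"
      unfolding move_def using hops_ladder_pos_descend by blast
    moreover have "nimval (ladder_pos e k') = k'" using \<open>k' \<in> {..<k}\<close> less.IH by simp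
    ultimately show "k' \<in> nimval ` {q. move (ladder_pos e k) q}" by force
  qed
  then show ?case using nimval_eq_mex[OF finite_ladder_pos] mex_lessThan by simp
qed

lemma two_pegs_then_odd_sites:
  "[True, True] @ concat (replicate n [False, True]) = map (\<lambda>k. k = 0 \<or> odd k) [0..<2 * n + 2]"
  by (induction n) (simp_all add: replicate_append_same[symmetric])

lemma word_pos_map_upt: "word_pos (map P [0..<m]) = int ` {k. k < m \<and> P k}"
  by (auto simp: word_pos_def)

lemma word_pos_eq_ladder_pos:
  "word_pos ([True, True] @ concat (replicate n [False, True])) = ladder_pos (2 * int n + 1) (Suc n)"
proof -
  have "x \<in> ladder_pos (2 * int n + 1) (Suc n) \<longleftrightarrow> (\<exists>k. x = int k \<and> k < 2 * n + 2 \<and> (k = 0 \<or> odd k))"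
    for x
  proof
    assume "x \<in> ladder_pos (2 * int n + 1) (Suc n)"
    then have "x = int (nat x) \<and> nat x < 2 * n + 2 \<and> (nat x = 0 \<or> odd (nat x))"
      unfolding ladder_pos_def by (auto simp: even_nat_iff; presburger)
    then show "\<exists>k. x = int k \<and> k < 2 * n + 2 \<and> (k = 0 \<or> odd k)" by blast
  qed (auto simp: ladder_pos_def; presburger)
  then show ?thesis unfolding two_pegs_then_odd_sites word_pos_map_upt by auto
qed

theorem mainTheorem6:
  fixes n :: nat
  shows "nimval (word_pos ([True, True] @ concat (replicate n [False, True]))) = n + 1"
  unfolding word_pos_eq_ladder_pos nimval_ladder_pos by simp

end
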